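(* Let $0<T<\infty$, $a,b\in\mathbb{R}$, $(B_t)_{t\in[0,T]}$ the continuous version of $B_t=\langle\cdot,\mathbf{1}_{[0,t)}\rangle$ on the white noise space, $X_t:=a(1-\frac tT)+b\frac tT+B_t-\frac tT B_T$, and for $\varepsilon>0$ let $\mathcal{I}^{BB}_\varepsilon:=\int_0^T\int_0^t p_\varepsilon(X_t-X_s)\,ds\,dt$ with $p_\varepsilon(x)=(2\pi\varepsilon)^{-1/2}e^{-x^2/(2\varepsilon)}$; let $\mathcal{I}^{BB}\in L^2(\mu)$ be the $L^2(\mu)$-limit of $\mathcal{I}^{BB}_\varepsilon$ as $\varepsilon\downarrow0$ (which exists). Then for every $z\in\mathbb{C}$ with $\operatorname{Re}z\le 0$ and every $1\le p<\infty$, $\exp(z\mathcal{I}^{BB}_\varepsilon)$ converges to $\exp(z\mathcal{I}^{BB})$ in $L^p(\mu)$ as $\varepsilon\to0$.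
   Context: $\mu$ is the white noise measure on the space $\mathcal{S}'(\mathbb{R})$ of tempered distributions: $\int\exp(i\langle\omega,\xi\rangle)d\mu(\omega)=\exp(-\frac12\langle\xi,\xi\rangle)$ for Schwartz $\xi$, with $\langle\cdot,\cdot\rangle$ the dual pairing extending the $L^2(\mathbb{R})$ inner product; for $\xi\in L^2(\mathbb{R})$, $\langle\cdot,\xi\rangle$ is an $L^2(\mu)$-limit. $(B_t)$ is then a standard Brownian motion and $(X_t)$ a Brownian bridge from $a$ to $b$ on $[0,T]$. $L^p(\mu)$ denotes complex-valued $p$-integrable functions w.r.t. $\mu$. *)

theory Defs
  imports "HOL-Probability.Probability"
begin

definition heat_kernel :: "real \<Rightarrow> real \<Rightarrow> real" where
  "heat_kernel \<epsilon> x = exp (- (x ^ 2) / (2 * \<epsilon>)) / sqrt (2 * pi * \<epsilon>)"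

definition brownian_motion_on :: "'a measure \<Rightarrow> real \<Rightarrow> (real \<Rightarrow> 'a \<Rightarrow> real) \<Rightarrow> bool" where
  "brownian_motion_on M T B \<longleftrightarrow>
     prob_space M \<and>
     (\<forall>t\<in>{0..T}. B t \<in> borel_measurable M) \<and>
     (\<forall>\<omega>\<in>space M. B 0 \<omega> = 0) \<and>
     (\<forall>\<omega>\<in>space M. continuous_on {0..T} (\<lambda>t. B t \<omega>)) \<and>
     (\<forall>s t. 0 \<le> s \<and> s < t \<and> t \<le> T \<longrightarrow>
        distributed M lborel (\<lambda>\<omega>. B t \<omega> - B s \<omega>) (normal_density 0 (sqrt (t - s)))) \<and>
     (\<forall>(n::nat) (ts::nat \<Rightarrow> real). 0 \<le> ts 0 \<and> ts n \<le> T \<and> (\<forall>i<n. ts i < ts (Suc i)) \<longrightarrow>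
        prob_space.indep_vars M (\<lambda>_. borel) (\<lambda>i \<omega>. B (ts (Suc i)) \<omega> - B (ts i) \<omega>) {..<n})"

definition brownian_bridge :: "real \<Rightarrow> real \<Rightarrow> real \<Rightarrow> (real \<Rightarrow> 'a \<Rightarrow> real) \<Rightarrow> real \<Rightarrow> 'a \<Rightarrow> real" where
  "brownian_bridge a b T B t \<omega> = a * (1 - t / T) + b * (t / T) + B t \<omega> - (t / T) * B T \<omega>"

definition self_int_eps :: "real \<Rightarrow> real \<Rightarrow> real \<Rightarrow> (real \<Rightarrow> 'a \<Rightarrow> real) \<Rightarrow> real \<Rightarrow> 'a \<Rightarrow> real" where
  "self_int_eps a b T B \<epsilon> \<omega> =
     (LINT t:{0..T}|lborel. (LINT s:{0..t}|lborel.
        heat_kernel \<epsilon> (brownian_bridge a b T B t \<omega> - brownian_bridge a b T B s \<omega>)))"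

end

theory Submission
  imports Defs
begin

text \<open>
  The approximations \<open>I\<^sub>\<epsilon>\<close> are nonnegative, hence so is their \<open>L\<^sup>2\<close>-limit \<open>I\<close>, almost surely.
  For \<open>Re z \<le> 0\<close> the map \<open>x \<mapsto> exp (z x)\<close> is bounded by 1 and \<open>|z|\<close>-Lipschitz on
  \<open>[0, \<infinity>)\<close>, so \<open>D\<^sub>\<epsilon> = |exp (z I\<^sub>\<epsilon>) - exp (z I)|\<close> satisfies \<open>D\<^sub>\<epsilon> \<le> 2\<close> and
  \<open>D\<^sub>\<epsilon> \<le> |z| |I\<^sub>\<epsilon> - I|\<close>. Therefore \<open>D\<^sub>\<epsilon>\<^sup>p \<le> 2\<^sup>p\<^sup>-\<^sup>1 D\<^sub>\<epsilon> \<le> \<delta> + C\<^sub>\<delta> |I\<^sub>\<epsilon> - I|\<^sup>2\<close>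
  for every \<open>\<delta> > 0\<close>: the \<open>p\<close>-th moment of \<open>D\<^sub>\<epsilon>\<close> is at most \<open>\<delta> + C\<^sub>\<delta> \<parallel>I\<^sub>\<epsilon> - I\<parallel>\<^sub>2\<^sup>2\<close>,
  which tends to \<open>\<delta>\<close> as \<open>\<epsilon> \<rightarrow> 0\<close>.
\<close>

lemma norm_exp_mult_of_real_le_1:
  fixes z :: complex and x :: real
  assumes "Re z \<le> 0" and "0 \<le> x"
  shows "norm (exp (z * complex_of_real x)) \<le> 1"
  using assms by (simp add: norm_exp_eq_Re mult_nonpos_nonneg)

lemma norm_exp_mult_of_real_diff_le:
  fixes z :: complex and x y :: real
  assumes z: "Re z \<le> 0" and "0 \<le> x" and "0 \<le> y"
  shows "norm (exp (z * complex_of_real x) - exp (z * complex_of_real y)) \<le> norm z * \<bar>x - y\<bar>"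
proof -
  let ?S = "complex_of_real ` {0..}"
  have "convex ?S"
    by (intro convex_linear_image) (auto intro: bounded_linear_of_real)
  then have "norm (exp (z * complex_of_real x) - exp (z * complex_of_real y))
      \<le> norm z * norm (complex_of_real x - complex_of_real y)"
  proof (rule field_differentiable_bound[where f' = "\<lambda>w. z * exp (z * w)"])
    fix w assume "w \<in> ?S"
    show "((\<lambda>w. exp (z * w)) has_field_derivative z * exp (z * w)) (at w within ?S)"
      by (auto intro!: derivative_eq_intros)
    from \<open>w \<in> ?S\<close> obtain r where "0 \<le> r" "w = complex_of_real r" by auto
    then show "norm (z * exp (z * w)) \<le> norm z"
      using norm_exp_mult_of_real_le_1[OF z] by (simp add: norm_mult mult_left_le)
  qed (use assms in auto)
  then show ?thesis by (simp flip: of_real_diff)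
qed

lemma powr_le_bound_powr_mult:
  fixes x c p :: real
  assumes "0 \<le> x" and "x \<le> c" and "1 \<le> p"
  shows "x powr p \<le> c powr (p - 1) * x"
proof -
  have "x powr p = x powr (p - 1) * x"
    using assms by (simp add: powr_mult_base mult.commute)
  also have "\<dots> \<le> c powr (p - 1) * x"
    using assms by (intro mult_right_mono powr_mono2) auto
  finally show ?thesis .
qed

lemma le_add_square_divide:
  fixes x e \<delta> :: real
  assumes "0 \<le> x" and "x \<le> e" and "0 < \<delta>"
  shows "x \<le> \<delta> + e\<^sup>2 / \<delta>"
proof (cases "x \<le> \<delta>")
  case True
  then show ?thesis using assms by (simp add: add_increasing2)
next
  case False
  then have "x * \<delta> \<le> x * e"
    using assms by (intro mult_left_mono) auto
  also have "\<dots> \<le> e * e"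
    using assms by (intro mult_right_mono) auto
  finally have "x * \<delta> \<le> e\<^sup>2"
    by (simp add: power2_eq_square)
  then have "x \<le> e\<^sup>2 / \<delta>"
    using assms by (simp add: field_simps mult.commute)
  then show ?thesis
    using assms by linarith
qed

lemma norm_exp_mult_of_real_diff_powr_le:
  fixes z :: complex and x y p \<delta> :: real
  assumes z: "Re z \<le> 0" and x: "0 \<le> x" and y: "0 \<le> y" and p: "1 \<le> p" and \<delta>: "0 < \<delta>"
  shows "norm (exp (z * complex_of_real x) - exp (z * complex_of_real y)) powr p
    \<le> \<delta> + (2 powr (p - 1))\<^sup>2 * (norm z)\<^sup>2 / \<delta> * (x - y)\<^sup>2"
proof -
  define N where "N = norm (exp (z * complex_of_real x) - exp (z * complex_of_real y))"
  define K :: real where "K = 2 powr (p - 1)"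
  have K: "0 < K" by (simp add: K_def)
  have "N \<le> 2"
    using norm_triangle_ineq4[of "exp (z * complex_of_real x)" "exp (z * complex_of_real y)"]
      norm_exp_mult_of_real_le_1[OF z x] norm_exp_mult_of_real_le_1[OF z y]
    unfolding N_def by linarith
  then have "N powr p \<le> K * N"
    unfolding K_def by (intro powr_le_bound_powr_mult) (simp_all add: N_def p)
  moreover have "N \<le> \<delta> / K + (norm z * \<bar>x - y\<bar>)\<^sup>2 / (\<delta> / K)"
    using norm_exp_mult_of_real_diff_le[OF z x y] K \<delta>
    by (intro le_add_square_divide) (simp_all add: N_def)
  then have "K * N \<le> \<delta> + K\<^sup>2 * (norm z)\<^sup>2 / \<delta> * (x - y)\<^sup>2"
    using K by (simp add: field_simps power2_eq_square)
  ultimately show ?thesis by (simp add: N_def K_def)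
qed

lemma (in prob_space) nn_integral_exp_diff_powr_le:
  fixes f g :: "'a \<Rightarrow> real" and z :: complex and p \<delta> :: real
  assumes [measurable]: "f \<in> borel_measurable M" "g \<in> borel_measurable M"
    and f: "\<And>\<omega>. \<omega> \<in> space M \<Longrightarrow> 0 \<le> f \<omega>" and g: "AE \<omega> in M. 0 \<le> g \<omega>"
    and z: "Re z \<le> 0" and p: "1 \<le> p" and \<delta>: "0 < \<delta>"
  shows "(\<integral>\<^sup>+ \<omega>. ennreal (norm (exp (z * complex_of_real (f \<omega>)) - exp (z * complex_of_real (g \<omega>))) powr p) \<partial>M)
    \<le> ennreal \<delta> + ennreal ((2 powr (p - 1))\<^sup>2 * (norm z)\<^sup>2 / \<delta>) * (\<integral>\<^sup>+ \<omega>. ennreal ((f \<omega> - g \<omega>)\<^sup>2) \<partial>M)"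
proof -
  define C where "C = (2 powr (p - 1))\<^sup>2 * (norm z)\<^sup>2 / \<delta>"
  have C: "0 \<le> C" using \<delta> by (simp add: C_def)
  have "(\<integral>\<^sup>+ \<omega>. ennreal (norm (exp (z * complex_of_real (f \<omega>)) - exp (z * complex_of_real (g \<omega>))) powr p) \<partial>M)
      \<le> (\<integral>\<^sup>+ \<omega>. ennreal \<delta> + ennreal C * ennreal ((f \<omega> - g \<omega>)\<^sup>2) \<partial>M)"
  proof (rule nn_integral_mono_AE)
    show "AE \<omega> in M. ennreal (norm (exp (z * complex_of_real (f \<omega>)) - exp (z * complex_of_real (g \<omega>))) powr p)
        \<le> ennreal \<delta> + ennreal C * ennreal ((f \<omega> - g \<omega>)\<^sup>2)"
      using g AE_space
    proof eventually_elim
      case (elim \<omega>)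
      have "norm (exp (z * complex_of_real (f \<omega>)) - exp (z * complex_of_real (g \<omega>))) powr p
          \<le> \<delta> + C * (f \<omega> - g \<omega>)\<^sup>2"
        unfolding C_def by (rule norm_exp_mult_of_real_diff_powr_le[OF z f[OF elim(2)] elim(1) p \<delta>])
      then have "ennreal (norm (exp (z * complex_of_real (f \<omega>)) - exp (z * complex_of_real (g \<omega>))) powr p)
          \<le> ennreal (\<delta> + C * (f \<omega> - g \<omega>)\<^sup>2)"
        by (rule ennreal_leI)
      also have "\<dots> = ennreal \<delta> + ennreal C * ennreal ((f \<omega> - g \<omega>)\<^sup>2)"
        using \<delta> C by (simp add: ennreal_plus ennreal_mult)
      finally show ?case .
    qed
  qed
  also have "\<dots> = ennreal \<delta> + ennreal C * (\<integral>\<^sup>+ \<omega>. ennreal ((f \<omega> - g \<omega>)\<^sup>2) \<partial>M)"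
    by (subst nn_integral_add) (simp_all add: nn_integral_cmult emeasure_space_1)
  finally show ?thesis by (simp add: C_def)
qed

lemma tendsto_zero_if_le_add_mult_tendsto_zero:
  fixes F G :: "'b \<Rightarrow> ennreal" and C :: "real \<Rightarrow> real"
  assumes G: "(G \<longlongrightarrow> 0) L"
    and bound: "\<And>\<delta>. 0 < \<delta> \<Longrightarrow> \<forall>\<^sub>F x in L. F x \<le> ennreal \<delta> + ennreal (C \<delta>) * G x"
  shows "(F \<longlongrightarrow> 0) L"
proof (rule tendsto_zero_ennreal)
  fix r :: real assume "0 < r"
  then have \<delta>: "0 < r / 2" by simp
  have "((\<lambda>x. ennreal (r / 2) + ennreal (C (r / 2)) * G x) \<longlongrightarrow> ennreal (r / 2) + ennreal (C (r / 2)) * 0) L"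
    by (intro tendsto_add tendsto_const ennreal_tendsto_cmult G) simp
  moreover have "ennreal (r / 2) < ennreal r"
    using \<open>0 < r\<close> by (intro ennreal_lessI) simp_all
  ultimately have "\<forall>\<^sub>F x in L. ennreal (r / 2) + ennreal (C (r / 2)) * G x < ennreal r"
    by (intro order_tendstoD(2)) simp_all
  with bound[OF \<delta>] show "\<forall>\<^sub>F x in L. F x < ennreal r"
    by eventually_elim (rule order.strict_trans1)
qed

lemma AE_nonneg_if_L2_limit_of_nonneg:
  fixes f :: "'b \<Rightarrow> 'a \<Rightarrow> real" and g :: "'a \<Rightarrow> real"
  assumes "g \<in> borel_measurable M" and "L \<noteq> bot"
    and lim: "((\<lambda>x. \<integral>\<^sup>+ \<omega>. ennreal ((f x \<omega> - g \<omega>)\<^sup>2) \<partial>M) \<longlongrightarrow> 0) L"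
    and nonneg: "\<forall>\<^sub>F x in L. \<forall>\<omega>\<in>space M. 0 \<le> f x \<omega>"
  shows "AE \<omega> in M. 0 \<le> g \<omega>"
proof -
  \<comment> \<open>The \<open>L\<^sup>2\<close>-distance of \<open>g\<close> to the nonnegative functions is the norm of its negative part.\<close>
  have "\<forall>\<^sub>F x in L. (\<integral>\<^sup>+ \<omega>. ennreal ((min (g \<omega>) 0)\<^sup>2) \<partial>M) \<le> (\<integral>\<^sup>+ \<omega>. ennreal ((f x \<omega> - g \<omega>)\<^sup>2) \<partial>M)"
    using nonneg
  proof eventually_elim
    case (elim x)
    have "\<bar>min (g \<omega>) 0\<bar> \<le> \<bar>f x \<omega> - g \<omega>\<bar>" if "\<omega> \<in> space M" for \<omega>
      using elim that by auto
    then have "(min (g \<omega>) 0)\<^sup>2 \<le> (f x \<omega> - g \<omega>)\<^sup>2" if "\<omega> \<in> space M" for \<omega>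
      using that by (simp only: abs_le_square_iff)
    then show ?case by (intro nn_integral_mono ennreal_leI)
  qed
  then have "(\<integral>\<^sup>+ \<omega>. ennreal ((min (g \<omega>) 0)\<^sup>2) \<partial>M) \<le> 0"
    using tendsto_le[OF \<open>L \<noteq> bot\<close> lim tendsto_const] by simp
  moreover have "(\<lambda>\<omega>. ennreal ((min (g \<omega>) 0)\<^sup>2)) \<in> borel_measurable M"
    using \<open>g \<in> borel_measurable M\<close> by measurable
  ultimately have "AE \<omega> in M. ennreal ((min (g \<omega>) 0)\<^sup>2) = 0"
    by (simp add: nn_integral_0_iff_AE)
  then show ?thesis
    by eventually_elim (auto simp: min_def split: if_splits)
qed

lemma tendsto_floor_grid:
  fixes t :: real
  shows "(\<lambda>n. of_int \<lfloor>real (Suc n) * t\<rfloor> / real (Suc n)) \<longlonglongrightarrow> t"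
proof -
  have bound: "\<bar>of_int \<lfloor>real (Suc n) * t\<rfloor> / real (Suc n) - t\<bar> \<le> 1 / real (Suc n)" for n
  proof -
    have "\<bar>of_int \<lfloor>real (Suc n) * t\<rfloor> - real (Suc n) * t\<bar> \<le> 1" by linarith
    then have "\<bar>(of_int \<lfloor>real (Suc n) * t\<rfloor> - real (Suc n) * t) / real (Suc n)\<bar> \<le> 1 / real (Suc n)"
      by (simp add: divide_right_mono)
    then show ?thesis by (simp add: diff_divide_distrib)
  qed
  have "(\<lambda>n. 1 / real (Suc n)) \<longlonglongrightarrow> 0"
    by (rule LIMSEQ_Suc[OF lim_const_over_n])
  then have "(\<lambda>n. of_int \<lfloor>real (Suc n) * t\<rfloor> / real (Suc n) - t) \<longlonglongrightarrow> 0"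
    by (rule Lim_null_comparison[rotated]) (use bound in simp)
  then show ?thesis by (simp add: LIM_zero_iff)
qed

lemma borel_measurable_clamped_continuous_process:
  fixes X :: "real \<Rightarrow> 'a \<Rightarrow> real" and T :: real
  assumes meas: "\<And>t. t \<in> {0..T} \<Longrightarrow> X t \<in> borel_measurable M"
    and cont: "\<And>\<omega>. \<omega> \<in> space M \<Longrightarrow> continuous_on {0..T} (\<lambda>t. X t \<omega>)"
    and T: "0 \<le> T"
  shows "(\<lambda>x. X (max 0 (min T (snd x))) (fst x)) \<in> borel_measurable (M \<Otimes>\<^sub>M lborel)"
proof -
  define clamp where "clamp t = max 0 (min T t)" for t
  define q where "q n t = clamp (of_int \<lfloor>real (Suc n) * t\<rfloor> / real (Suc n))" for n t
  have clamp_in: "clamp t \<in> {0..T}" for t using T by (auto simp: clamp_def)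
  have approx_meas: "(\<lambda>x. X (q n (snd x)) (fst x)) \<in> borel_measurable (M \<Otimes>\<^sub>M lborel)" for n
    unfolding q_def
  proof (rule measurable_compose_countable[where f = "\<lambda>k x. X (clamp (of_int k / real (Suc n))) (fst x)"])
    show "(\<lambda>x. X (clamp (of_int k / real (Suc n))) (fst x)) \<in> borel_measurable (M \<Otimes>\<^sub>M lborel)" for k :: int
      using meas[OF clamp_in] by measurable
  qed measurable
  have approx_lim: "(\<lambda>n. X (q n t) \<omega>) \<longlonglongrightarrow> X (clamp t) \<omega>" if "\<omega> \<in> space M" for t \<omega>
  proof -
    have "continuous_on UNIV clamp" unfolding clamp_def by (intro continuous_intros)
    then have "(\<lambda>n. q n t) \<longlonglongrightarrow> clamp t"
      unfolding q_def by (rule continuous_on_tendsto_compose[OF _ tendsto_floor_grid]) simp_all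
    then show ?thesis
      by (rule continuous_on_tendsto_compose[OF cont[OF that]])
         (use T in \<open>auto simp: q_def clamp_def intro!: always_eventually\<close>)
  qed
  have "(\<lambda>x. X (clamp (snd x)) (fst x)) \<in> borel_measurable (M \<Otimes>\<^sub>M lborel)"
  proof (rule borel_measurable_LIMSEQ_metric[OF approx_meas])
    fix x :: "'a \<times> real" assume "x \<in> space (M \<Otimes>\<^sub>M lborel)"
    then show "(\<lambda>n. X (q n (snd x)) (fst x)) \<longlonglongrightarrow> X (clamp (snd x)) (fst x)"
      by (intro approx_lim) (auto simp: space_pair_measure)
  qed
  then show ?thesis by (simp only: clamp_def)
qed

lemma borel_measurable_self_int_eps:
  fixes B :: "real \<Rightarrow> 'a \<Rightarrow> real"
  assumes meas: "\<And>t. t \<in> {0..T} \<Longrightarrow> B t \<in> borel_measurable M"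
    and cont: "\<And>\<omega>. \<omega> \<in> space M \<Longrightarrow> continuous_on {0..T} (\<lambda>t. B t \<omega>)"
    and T: "0 \<le> T"
  shows "self_int_eps a b T B \<epsilon> \<in> borel_measurable M"
proof -
  \<comment> \<open>Clamping time to \<open>[0, T]\<close> changes nothing inside the integration domain.\<close>
  define W where "W x = B (max 0 (min T (snd x))) (fst x)" for x :: "'a \<times> real"
  have [measurable]: "W \<in> borel_measurable (M \<Otimes>\<^sub>M lborel)"
    unfolding W_def by (rule borel_measurable_clamped_continuous_process[OF meas cont T])
  have [measurable]: "B T \<in> borel_measurable M"
    using meas T by simp
  define X where "X \<omega> t = a * (1 - t / T) + b * (t / T) + W (\<omega>, t) - (t / T) * B T \<omega>" for \<omega> t
  have [measurable]: "(\<lambda>x. W (fst (fst x), snd x)) \<in> borel_measurable ((M \<Otimes>\<^sub>M lborel) \<Otimes>\<^sub>M lborel)"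
    by (rule measurable_compose[of "\<lambda>x. (fst (fst x), snd x)"]) measurable
  have [measurable]: "Measurable.pred ((M \<Otimes>\<^sub>M borel) \<Otimes>\<^sub>M borel) (\<lambda>x :: ('a \<times> real) \<times> real. snd x \<in> {0..snd (fst x)})"
    unfolding atLeastAtMost_iff by measurable
  have self_int_eps_eq: "self_int_eps a b T B \<epsilon> =
      (\<lambda>\<omega>. LINT t:{0..T}|lborel. LINT s:{0..t}|lborel. heat_kernel \<epsilon> (X \<omega> t - X \<omega> s))"
    unfolding self_int_eps_def
    by (auto simp: X_def W_def brownian_bridge_def intro!: ext set_lebesgue_integral_cong)
  show ?thesis
    unfolding self_int_eps_eq set_lebesgue_integral_def heat_kernel_def X_def by measurable
qed

lemma self_int_eps_nonneg:
  assumes "0 < \<epsilon>"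
  shows "0 \<le> self_int_eps a b T B \<epsilon> \<omega>"
  unfolding self_int_eps_def set_lebesgue_integral_def heat_kernel_def
  using assms by (auto intro!: integral_nonneg_AE AE_I2 scaleR_nonneg_nonneg)

theorem corollary3p2:
  fixes M :: "'a measure" and B :: "real \<Rightarrow> 'a \<Rightarrow> real"
    and T a b :: real and I :: "'a \<Rightarrow> real"
  assumes T_pos: "0 < T"
    and BM: "brownian_motion_on M T B"
    and I_meas: "I \<in> borel_measurable M"
    and I_lim: "((\<lambda>\<epsilon>. \<integral>\<^sup>+ \<omega>. ennreal ((self_int_eps a b T B \<epsilon> \<omega> - I \<omega>)\<^sup>2) \<partial>M)
                  \<longlongrightarrow> 0) (at_right 0)"
  shows "\<forall>(z::complex) (p::real). Re z \<le> 0 \<and> 1 \<le> p \<longrightarrow>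
           ((\<lambda>\<epsilon>. \<integral>\<^sup>+ \<omega>. ennreal (norm (exp (z * complex_of_real (self_int_eps a b T B \<epsilon> \<omega>))
                                       - exp (z * complex_of_real (I \<omega>))) powr p) \<partial>M)
             \<longlongrightarrow> 0) (at_right 0)"
proof -
  interpret prob_space M
    using BM unfolding brownian_motion_on_def by simp
  define E where "E \<epsilon> = (\<integral>\<^sup>+ \<omega>. ennreal ((self_int_eps a b T B \<epsilon> \<omega> - I \<omega>)\<^sup>2) \<partial>M)" for \<epsilon>
  define D where "D z p \<epsilon> = (\<integral>\<^sup>+ \<omega>. ennreal (norm (exp (z * complex_of_real (self_int_eps a b T B \<epsilon> \<omega>))
                                       - exp (z * complex_of_real (I \<omega>))) powr p) \<partial>M)" for z p \<epsilon>
  have I_eps_meas: "self_int_eps a b T B \<epsilon> \<in> borel_measurable M" for \<epsilon>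
    using BM T_pos unfolding brownian_motion_on_def by (intro borel_measurable_self_int_eps) auto
  have eventually_pos: "\<forall>\<^sub>F \<epsilon> in at_right (0::real). 0 < \<epsilon>"
    by (simp add: eventually_at_right_less)
  have I_nonneg: "AE \<omega> in M. 0 \<le> I \<omega>"
    using eventually_pos
    by (intro AE_nonneg_if_L2_limit_of_nonneg[OF I_meas _ I_lim])
       (auto elim!: eventually_mono intro: self_int_eps_nonneg)
  have "(D z p \<longlongrightarrow> 0) (at_right 0)" if z: "Re z \<le> 0" and p: "1 \<le> p" for z p
  proof (rule tendsto_zero_if_le_add_mult_tendsto_zero[OF I_lim[folded E_def]])
    fix \<delta> :: real assume "0 < \<delta>"
    show "\<forall>\<^sub>F \<epsilon> in at_right 0. D z p \<epsilon> \<le> ennreal \<delta> + ennreal ((2 powr (p - 1))\<^sup>2 * (norm z)\<^sup>2 / \<delta>) * E \<epsilon>"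
      using eventually_pos unfolding D_def E_def
      by eventually_elim
         (intro nn_integral_exp_diff_powr_le I_eps_meas I_meas self_int_eps_nonneg I_nonneg z p \<open>0 < \<delta>\<close>)
  qed
  then show ?thesis
    unfolding D_def by blast
qed

end
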